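(* For $\varepsilon\in(0,1/256]$, the number of pairs $(\mathcal S(\tau),\rho)$ with $\tau\in\Gamma$ and $\rho\in\{1,\dots,\lceil1/\varepsilon\rceil\}^{|\tau|}$ is $(\lceil1/\varepsilon\rceil)^{O(\sqrt{C_\varepsilon})}$.
   Context: $C_\varepsilon=\lceil\log_{1+\varepsilon}(1/\varepsilon)\rceil$. $\Gamma$ is the set of integer vectors $\tau=(\tau_1,\dots,\tau_K)\in\mathbb{Z}_{\ge0}^K$ with $0\le K=|\tau|\le\lceil2\sqrt{C_\varepsilon}\rceil$, $\tau_k+k\le\tau_{k+1}$ for $k\in[K-1]$, and $\tau_K\le C_\varepsilon-1$. For a Minimum Knapsack instance with costs indexed so that $1=c_1\ge\dots\ge c_n$, and $\tau\in\Gamma$, $\mathcal S(\tau)=\{S_1,\dots,S_K,S_\infty\}$ with $S_k=\{i\in\{2,\dots,n\}:(1+\varepsilon)^{-\tau_k}\ge c_i>(1+\varepsilon)^{-\min\{\tau_k+k,C_\varepsilon\}}\}$ for $k\in[K]$, and $S_\infty=\{i\in\{2,\dots,n\}: c_i\le(1+\varepsilon)^{-C_\varepsilon}\text{ and } c_i<\min_{l\in S_K}c_l\}$ (the second condition omitted if $K=0$). *)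

theory Defs
  imports Complex_Main
begin

definition Ceps :: "real \<Rightarrow> nat" where
  "Ceps \<epsilon> = nat \<lceil>log (1 + \<epsilon>) (1 / \<epsilon>)\<rceil>"

(* Gamma: tau is a list (tau_1,...,tau_K), 0-indexed as tau!0 .. tau!(K-1).
   The condition tau_k + k <= tau_{k+1} (k in [K-1], 1-indexed) becomes
   tau!i + (i+1) <= tau!(i+1) for i < K-1. *)
definition Gamma :: "real \<Rightarrow> nat list set" where
  "Gamma \<epsilon> = {\<tau>. length \<tau> \<le> nat \<lceil>2 * sqrt (real (Ceps \<epsilon>))\<rceil>
      \<and> (\<forall>i. i + 1 < length \<tau> \<longrightarrow> \<tau> ! i + (i + 1) \<le> \<tau> ! (i + 1))
      \<and> (\<tau> \<noteq> [] \<longrightarrow> last \<tau> \<le> Ceps \<epsilon> - 1)}"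

(* S_k for k = i+1 (0-indexed i < K) *)
definition Sk :: "(nat \<Rightarrow> real) \<Rightarrow> nat \<Rightarrow> real \<Rightarrow> nat list \<Rightarrow> nat \<Rightarrow> nat set" where
  "Sk c n \<epsilon> \<tau> i = {j \<in> {2..n}. (1 + \<epsilon>) powi (- int (\<tau> ! i)) \<ge> c j
      \<and> c j > (1 + \<epsilon>) powi (- int (min (\<tau> ! i + (i + 1)) (Ceps \<epsilon>)))}"

(* S_infinity; the condition c_j < min_{l in S_K} c_l is read with min over the
   empty set being +infinity, i.e. as: c_j < c_l for all l in S_K. *)
definition Sinf :: "(nat \<Rightarrow> real) \<Rightarrow> nat \<Rightarrow> real \<Rightarrow> nat list \<Rightarrow> nat set" where
  "Sinf c n \<epsilon> \<tau> = {j \<in> {2..n}. c j \<le> (1 + \<epsilon>) powi (- int (Ceps \<epsilon>))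
      \<and> (\<tau> \<noteq> [] \<longrightarrow> (\<forall>l \<in> Sk c n \<epsilon> \<tau> (length \<tau> - 1). c j < c l))}"

(* S(tau) = {S_1,...,S_K,S_inf}, represented as the list [S_1,...,S_K] together with S_inf *)
definition Sfam :: "(nat \<Rightarrow> real) \<Rightarrow> nat \<Rightarrow> real \<Rightarrow> nat list \<Rightarrow> nat set list \<times> nat set" where
  "Sfam c n \<epsilon> \<tau> = (map (Sk c n \<epsilon> \<tau>) [0..<length \<tau>], Sinf c n \<epsilon> \<tau>)"

definition pairs :: "(nat \<Rightarrow> real) \<Rightarrow> nat \<Rightarrow> real \<Rightarrow> ((nat set list \<times> nat set) \<times> nat list) set" where
  "pairs c n \<epsilon> = {(Sfam c n \<epsilon> \<tau>, \<rho>) | \<tau> \<rho>. \<tau> \<in> Gamma \<epsilon> \<and> length \<rho> = length \<tau>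
      \<and> set \<rho> \<subseteq> {1..nat \<lceil>1 / \<epsilon>\<rceil>}}"

end

theory Submission
  imports Defs
begin

text \<open>The family \<open>\<S>(\<tau>)\<close> is a function of \<open>\<tau>\<close>, so it suffices to count the pairs \<open>(\<tau>, \<rho>)\<close>.
  Both are lists of length at most \<open>L = \<lceil>2 \<surd>C\<^sub>\<epsilon>\<rceil>\<close>, over alphabets of sizes \<open>C\<^sub>\<epsilon>\<close> and
  \<open>M = \<lceil>1/\<epsilon>\<rceil>\<close> respectively, the entries of \<open>\<tau>\<close> being bounded by its last one.  Since
  \<open>C\<^sub>\<epsilon> \<le> 2/\<epsilon>\<^sup>2 \<le> 2M\<^sup>2 \<le> M\<^sup>3\<close>, there are at most \<open>M\<^bsup>6L\<^esup> \<le> M\<^bsup>18 \<surd>C\<^sub>\<epsilon>\<^esup>\<close> such pairs.\<close>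

definition bounded_lists :: "'a set \<Rightarrow> nat \<Rightarrow> 'a list set" where
  "bounded_lists A L = {xs. set xs \<subseteq> A \<and> length xs \<le> L}"

lemma finite_bounded_lists: "finite A \<Longrightarrow> finite (bounded_lists A L)"
  unfolding bounded_lists_def by (rule finite_lists_length_le)

lemma card_bounded_lists_le:
  assumes "finite A" "A \<noteq> {}"
  shows "card (bounded_lists A L) \<le> Suc L * card A ^ L"
proof -
  have "card (bounded_lists A L) = (\<Sum>i\<le>L. card A ^ i)"
    unfolding bounded_lists_def using assms(1) by (rule card_lists_length_le)
  also have "\<dots> \<le> (\<Sum>i\<le>L. card A ^ L)"
    using assms by (intro sum_mono power_increasing) (auto simp: Suc_leI card_gt_0_iff)
  finally show ?thesis by simp
qed

lemma Gamma_sorted: "\<tau> \<in> Gamma \<epsilon> \<Longrightarrow> sorted \<tau>"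
  unfolding Gamma_def sorted_iff_nth_Suc by fastforce

lemma Gamma_set_subset:
  assumes "\<tau> \<in> Gamma \<epsilon>" "0 < Ceps \<epsilon>"
  shows "set \<tau> \<subseteq> {..<Ceps \<epsilon>}"
proof
  fix x assume "x \<in> set \<tau>"
  then obtain i where i: "i < length \<tau>" "x = \<tau> ! i" by (auto simp: in_set_conv_nth)
  moreover have "\<tau> \<noteq> []" using i(1) by auto
  ultimately have "x \<le> last \<tau>"
    using sorted_nth_mono[OF Gamma_sorted[OF assms(1)], of i "length \<tau> - 1"]
    by (simp add: last_conv_nth)
  moreover have "last \<tau> \<le> Ceps \<epsilon> - 1" using assms(1) i(1) unfolding Gamma_def by auto
  ultimately show "x \<in> {..<Ceps \<epsilon>}" using assms(2) by simp
qed

lemma Gamma_length_le: "\<tau> \<in> Gamma \<epsilon> \<Longrightarrow> length \<tau> \<le> nat \<lceil>2 * sqrt (real (Ceps \<epsilon>))\<rceil>"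
  unfolding Gamma_def by simp

lemma Ceps_pos:
  assumes "0 < \<epsilon>" "\<epsilon> < 1"
  shows "0 < Ceps \<epsilon>"
  using assms unfolding Ceps_def by (simp add: zero_less_log_cancel_iff)

lemma two_le_nat_ceiling_inverse:
  fixes \<epsilon> :: real
  assumes "0 < \<epsilon>" "\<epsilon> \<le> 1/2"
  shows "2 \<le> nat \<lceil>1 / \<epsilon>\<rceil>"
proof -
  have "2 \<le> 1 / \<epsilon>" using assms by (simp add: field_simps)
  then show ?thesis by linarith
qed

lemma Ceps_le_cube:
  assumes "0 < \<epsilon>" "\<epsilon> \<le> 1/2"
  shows "Ceps \<epsilon> \<le> nat \<lceil>1 / \<epsilon>\<rceil> ^ 3"
proof -
  define M where "M = nat \<lceil>1 / \<epsilon>\<rceil>"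
  have M: "1 / \<epsilon> \<le> real M" "2 \<le> M"
    using assms two_le_nat_ceiling_inverse unfolding M_def by (linarith, blast)
  have "\<epsilon> / 2 \<le> \<epsilon> - \<epsilon>\<^sup>2" using assms by (simp add: power2_eq_square)
  also have "\<dots> \<le> ln (1 + \<epsilon>)" using assms by (intro ln_one_plus_pos_lower_bound) auto
  finally have ln_lower: "\<epsilon> / 2 \<le> ln (1 + \<epsilon>)" .
  have "ln (1 / \<epsilon>) \<le> 1 / \<epsilon>" using assms by (intro less_imp_le ln_less_self) simp
  then have "log (1 + \<epsilon>) (1 / \<epsilon>) \<le> (1 / \<epsilon>) / (\<epsilon> / 2)"
    unfolding log_def using assms ln_lower
    by (intro frac_le) (auto simp: field_simps intro: order.trans[OF _ ln_lower])
  also have "\<dots> = 2 * (1 / \<epsilon>)\<^sup>2" by (simp add: field_simps power2_eq_square)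
  also have "\<dots> \<le> real (2 * M\<^sup>2)" using M assms by (simp add: power_mono)
  finally have "Ceps \<epsilon> \<le> 2 * M\<^sup>2"
    unfolding Ceps_def by (simp add: nat_le_iff ceiling_le_iff)
  also have "\<dots> \<le> M ^ 3" using M(2) by (simp add: power2_eq_square power3_eq_cube)
  finally show ?thesis unfolding M_def .
qed

lemma pairs_subset_image:
  assumes "0 < Ceps \<epsilon>"
  defines "L \<equiv> nat \<lceil>2 * sqrt (real (Ceps \<epsilon>))\<rceil>"
  shows "pairs c n \<epsilon> \<subseteq> (\<lambda>(\<tau>, \<rho>). (Sfam c n \<epsilon> \<tau>, \<rho>)) `
           (bounded_lists {..<Ceps \<epsilon>} L \<times> bounded_lists {1..nat \<lceil>1 / \<epsilon>\<rceil>} L)"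
proof
  fix p assume "p \<in> pairs c n \<epsilon>"
  then obtain \<tau> \<rho> where p: "p = (Sfam c n \<epsilon> \<tau>, \<rho>)" "\<tau> \<in> Gamma \<epsilon>"
    "length \<rho> = length \<tau>" "set \<rho> \<subseteq> {1..nat \<lceil>1 / \<epsilon>\<rceil>}"
    unfolding pairs_def by auto
  then have "(\<tau>, \<rho>) \<in> bounded_lists {..<Ceps \<epsilon>} L \<times> bounded_lists {1..nat \<lceil>1 / \<epsilon>\<rceil>} L"
    using Gamma_set_subset[OF p(2) assms(1)] Gamma_length_le[OF p(2)]
    unfolding bounded_lists_def L_def by simp
  then show "p \<in> (\<lambda>(\<tau>, \<rho>). (Sfam c n \<epsilon> \<tau>, \<rho>)) `
           (bounded_lists {..<Ceps \<epsilon>} L \<times> bounded_lists {1..nat \<lceil>1 / \<epsilon>\<rceil>} L)"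
    using p(1) by force
qed

lemma finite_pairs_and_card_le:
  assumes "0 < \<epsilon>" "\<epsilon> \<le> 1/2"
  defines "L \<equiv> nat \<lceil>2 * sqrt (real (Ceps \<epsilon>))\<rceil>" and "M \<equiv> nat \<lceil>1 / \<epsilon>\<rceil>"
  shows "finite (pairs c n \<epsilon>) \<and> card (pairs c n \<epsilon>) \<le> M ^ (6 * L)"
proof -
  define X where "X = bounded_lists {..<Ceps \<epsilon>} L \<times> bounded_lists {1..M} L"
  have C: "0 < Ceps \<epsilon>" "Ceps \<epsilon> \<le> M ^ 3"
    using Ceps_pos Ceps_le_cube assms unfolding M_def by auto
  have M: "2 \<le> M" using assms two_le_nat_ceiling_inverse unfolding M_def by blast
  have sub: "pairs c n \<epsilon> \<subseteq> (\<lambda>(\<tau>, \<rho>). (Sfam c n \<epsilon> \<tau>, \<rho>)) ` X"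
    using pairs_subset_image[OF C(1)] unfolding X_def L_def M_def .
  have fin: "finite X" unfolding X_def by (simp add: finite_bounded_lists)
  have "card (pairs c n \<epsilon>) \<le> card X"
    using sub fin by (meson card_image_le card_mono finite_imageI le_trans)
  also have "\<dots> \<le> (Suc L * Ceps \<epsilon> ^ L) * (Suc L * M ^ L)"
    unfolding X_def card_cartesian_product
    using card_bounded_lists_le[of "{..<Ceps \<epsilon>}" L] card_bounded_lists_le[of "{1..M}" L] C(1) M
    by (intro mult_mono) auto
  also have "\<dots> \<le> (M ^ L * (M ^ 3) ^ L) * (M ^ L * M ^ L)"
  proof -
    have "Suc L \<le> 2 ^ L" by (induction L) auto
    also have "\<dots> \<le> M ^ L" using M by (intro power_mono) auto
    finally show ?thesis using C(2) by (intro mult_mono power_mono) auto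
  qed
  also have "\<dots> = M ^ (6 * L)" by (simp flip: power_mult power_add)
  finally show ?thesis using sub fin finite_subset by blast
qed

lemma power_ceiling_sqrt_le_powr:
  assumes "1 \<le> M" "1 \<le> C"
  shows "M ^ (6 * nat \<lceil>2 * sqrt C\<rceil>) \<le> M powr (18 * sqrt C)"
proof -
  have "1 \<le> sqrt C" using assms by simp
  then have "real (6 * nat \<lceil>2 * sqrt C\<rceil>) \<le> 18 * sqrt C" by linarith
  then show ?thesis using assms by (simp add: powr_realpow[symmetric] powr_mono)
qed

theorem lemma6:
  shows "\<exists>C0 :: real. \<forall>(\<epsilon>::real) (n::nat) (c::nat \<Rightarrow> real).
     0 < \<epsilon> \<and> \<epsilon> \<le> 1/256 \<and> 1 \<le> n \<and> c 1 = 1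
     \<and> (\<forall>i j. 1 \<le> i \<and> i \<le> j \<and> j \<le> n \<longrightarrow> c j \<le> c i)
     \<and> (\<forall>i \<in> {1..n}. 0 < c i)
     \<longrightarrow> finite (pairs c n \<epsilon>)
       \<and> real (card (pairs c n \<epsilon>))
           \<le> real (nat \<lceil>1 / \<epsilon>\<rceil>) powr (C0 * sqrt (real (Ceps \<epsilon>)))"
proof (intro exI[of _ 18] allI impI, elim conjE)
  fix \<epsilon> :: real and n :: nat and c :: "nat \<Rightarrow> real"
  assume \<epsilon>: "0 < \<epsilon>" "\<epsilon> \<le> 1/256"
  define M where "M = nat \<lceil>1 / \<epsilon>\<rceil>"
  have pairs: "finite (pairs c n \<epsilon>)"
    "card (pairs c n \<epsilon>) \<le> M ^ (6 * nat \<lceil>2 * sqrt (real (Ceps \<epsilon>))\<rceil>)"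
    using finite_pairs_and_card_le[of \<epsilon> c n] \<epsilon> unfolding M_def by auto
  have ge_1: "1 \<le> real M" "1 \<le> real (Ceps \<epsilon>)"
    using \<epsilon> Ceps_pos[of \<epsilon>] two_le_nat_ceiling_inverse[of \<epsilon>] unfolding M_def by auto
  have "real (card (pairs c n \<epsilon>)) \<le> real M ^ (6 * nat \<lceil>2 * sqrt (real (Ceps \<epsilon>))\<rceil>)"
    using pairs(2) by (metis of_nat_le_iff of_nat_power)
  also have "\<dots> \<le> real M powr (18 * sqrt (real (Ceps \<epsilon>)))"
    using ge_1 by (rule power_ceiling_sqrt_le_powr)
  finally have "real (card (pairs c n \<epsilon>)) \<le> real M powr (18 * sqrt (real (Ceps \<epsilon>)))" .
  then show "finite (pairs c n \<epsilon>) \<and> real (card (pairs c n \<epsilon>))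
      \<le> real (nat \<lceil>1 / \<epsilon>\<rceil>) powr (18 * sqrt (real (Ceps \<epsilon>)))"
    using pairs(1) unfolding M_def by simp
qed

end
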